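(* Let $R=\mathbb{Z}_4+u\mathbb{Z}_4$ with $u^2=0$, let $n$ be odd, and let $\overline{\mu}:R^n\to R^n$, $\overline{\mu}(c_0,\dots,c_{n-1})=(c_0,(1+2u)c_1,\dots,(1+2u)^{n-1}c_{n-1})$. Then $C$ is a cyclic code over $R$ of length $n$ with minimum Lee distance $d_L$ if and only if $\overline{\mu}(C)$ is a $(1+2u)$-constacyclic code over $R$ of length $n$ with the same minimum Lee distance $d_L$.
   Context: Codes are linear ($R$-submodules of $R^n$). Cyclic: invariant under $(c_0,\dots,c_{n-1})\mapsto(c_{n-1},c_0,\dots,c_{n-2})$; $(1+2u)$-constacyclic: invariant under $(c_0,\dots,c_{n-1})\mapsto((1+2u)c_{n-1},c_0,\dots,c_{n-2})$. Lee weight on $\mathbb{Z}_4$: $w_L(0)=0,w_L(1)=w_L(3)=1,w_L(2)=2$; on $R$: $w_L(a+ub)=w_L(b)+w_L(2a+b)$; on $R^n$: sum of component weights; Lee distance $d_L(x,y)=w_L(x-y)$, and the minimum Lee distance of a code is the smallest Lee distance between distinct codewords. *)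

theory Defs
  imports Main "HOL-Library.Numeral_Type"
begin

text \<open>The ring R = Z4 + u Z4 with u^2 = 0. An element (a, b) represents a + u b.\<close>
type_synonym R = "4 \<times> 4"

definition R_add :: "R \<Rightarrow> R \<Rightarrow> R" where
  "R_add x y = (fst x + fst y, snd x + snd y)"

definition R_mul :: "R \<Rightarrow> R \<Rightarrow> R" where
  "R_mul x y = (fst x * fst y, fst x * snd y + snd x * fst y)"

definition R_zero :: R where "R_zero = (0, 0)"
definition R_one :: R where "R_one = (1, 0)"

definition unit_1_2u :: R where "unit_1_2u = (1, 2)"

fun R_pow :: "R \<Rightarrow> nat \<Rightarrow> R" where
  "R_pow x 0 = R_one"
| "R_pow x (Suc k) = R_mul x (R_pow x k)"

definition lee_Z4 :: "4 \<Rightarrow> nat" where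
  "lee_Z4 x = (if x = 0 then 0 else if x = 2 then 2 else 1)"

definition lee_R :: "R \<Rightarrow> nat" where
  "lee_R x = lee_Z4 (snd x) + lee_Z4 (2 * fst x + snd x)"

definition R_sub :: "R \<Rightarrow> R \<Rightarrow> R" where
  "R_sub x y = (fst x - fst y, snd x - snd y)"

definition lee_weight :: "R list \<Rightarrow> nat" where
  "lee_weight v = (\<Sum>x\<leftarrow>v. lee_R x)"

definition lee_dist :: "R list \<Rightarrow> R list \<Rightarrow> nat" where
  "lee_dist x y = lee_weight (map2 R_sub x y)"

definition vec_add :: "R list \<Rightarrow> R list \<Rightarrow> R list" where
  "vec_add x y = map2 R_add x y"

definition vec_smult :: "R \<Rightarrow> R list \<Rightarrow> R list" where
  "vec_smult r x = map (R_mul r) x"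

definition linear_code :: "nat \<Rightarrow> R list set \<Rightarrow> bool" where
  "linear_code n C \<longleftrightarrow>
     C \<subseteq> {v. length v = n} \<and> replicate n R_zero \<in> C \<and>
     (\<forall>x\<in>C. \<forall>y\<in>C. vec_add x y \<in> C) \<and>
     (\<forall>r. \<forall>x\<in>C. vec_smult r x \<in> C)"

definition cyc_shift :: "R list \<Rightarrow> R list" where
  "cyc_shift c = last c # butlast c"

definition constacyc_shift :: "R list \<Rightarrow> R list" where
  "constacyc_shift c = R_mul unit_1_2u (last c) # butlast c"

definition cyclic_code :: "nat \<Rightarrow> R list set \<Rightarrow> bool" where
  "cyclic_code n C \<longleftrightarrow> linear_code n C \<and> (\<forall>c\<in>C. cyc_shift c \<in> C)"

definition constacyclic_code :: "nat \<Rightarrow> R list set \<Rightarrow> bool" where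
  "constacyclic_code n C \<longleftrightarrow> linear_code n C \<and> (\<forall>c\<in>C. constacyc_shift c \<in> C)"

definition has_min_lee_dist :: "R list set \<Rightarrow> nat \<Rightarrow> bool" where
  "has_min_lee_dist C d \<longleftrightarrow>
     (\<exists>x\<in>C. \<exists>y\<in>C. x \<noteq> y \<and> lee_dist x y = d) \<and>
     (\<forall>x\<in>C. \<forall>y\<in>C. x \<noteq> y \<longrightarrow> d \<le> lee_dist x y)"

definition mu_bar :: "R list \<Rightarrow> R list" where
  "mu_bar c = map (\<lambda>i. R_mul (R_pow unit_1_2u i) (c ! i)) [0..<length c]"

end

theory Submission imports Defs begin

text \<open>Since (1+2u)^2 = 1 and multiplication by 1+2u preserves the Lee weight on R,
  the map mu_bar is an R-linear Lee isometry of R^n which is its own inverse.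
  For odd n the last coordinate of mu_bar c carries the factor (1+2u)^(n-1) = 1, and
  comparing coordinates gives the intertwining identity
  constacyc_shift (mu_bar c) = (1+2u) mu_bar (cyc_shift c).\<close>

lemma R_mul_assoc: "R_mul a (R_mul b c) = R_mul (R_mul a b) c"
  by (simp add: R_mul_def algebra_simps)

lemma R_mul_left_commute: "R_mul a (R_mul b c) = R_mul b (R_mul a c)"
  by (simp add: R_mul_def algebra_simps)

lemma R_mul_one_left [simp]: "R_mul R_one x = x"
  by (simp add: R_mul_def R_one_def)

lemma R_mul_zero_right: "R_mul a R_zero = R_zero"
  by (simp add: R_mul_def R_zero_def)

lemma R_mul_add_distrib: "R_mul a (R_add x y) = R_add (R_mul a x) (R_mul a y)"
  by (simp add: R_mul_def R_add_def algebra_simps)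

lemma R_mul_sub_distrib: "R_mul a (R_sub x y) = R_sub (R_mul a x) (R_mul a y)"
  by (simp add: R_mul_def R_sub_def algebra_simps)

lemma unit_1_2u_squared: "R_mul unit_1_2u unit_1_2u = R_one"
  by (simp add: R_mul_def unit_1_2u_def R_one_def)

lemma R_mul_unit_1_2u_twice [simp]: "R_mul unit_1_2u (R_mul unit_1_2u x) = x"
  by (simp add: R_mul_assoc unit_1_2u_squared)

lemma R_pow_unit_1_2u: "R_pow unit_1_2u i = (if even i then R_one else unit_1_2u)"
  by (induction i) (auto simp: unit_1_2u_squared R_mul_def unit_1_2u_def R_one_def)

lemma R_mul_R_pow_unit_1_2u_twice [simp]:
  "R_mul (R_pow unit_1_2u i) (R_mul (R_pow unit_1_2u i) x) = x"
  by (simp add: R_pow_unit_1_2u)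

lemma lee_R_mul_unit_1_2u: "lee_R (R_mul unit_1_2u x) = lee_R x"
proof -
  have four: "(4::4) = 0"
    by simp
  have "2 * fst x + (snd x + 2 * fst x) = snd x"
    by (simp add: algebra_simps four)
  then show ?thesis
    by (simp add: lee_R_def R_mul_def unit_1_2u_def algebra_simps)
qed

lemma lee_R_mul_R_pow_unit_1_2u: "lee_R (R_mul (R_pow unit_1_2u i) x) = lee_R x"
  by (simp add: R_pow_unit_1_2u lee_R_mul_unit_1_2u)

lemma vec_smult_unit_1_2u_twice [simp]:
  "vec_smult unit_1_2u (vec_smult unit_1_2u x) = x"
  by (simp add: vec_smult_def comp_def)

lemma length_mu_bar [simp]: "length (mu_bar c) = length c"
  by (simp add: mu_bar_def)

lemma nth_mu_bar [simp]: "i < length c \<Longrightarrow> mu_bar c ! i = R_mul (R_pow unit_1_2u i) (c ! i)"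
  by (simp add: mu_bar_def)

lemma mu_bar_mu_bar [simp]: "mu_bar (mu_bar c) = c"
  by (rule nth_equalityI) auto

lemma inj_mu_bar: "inj mu_bar"
  by (metis injI mu_bar_mu_bar)

lemma image_mu_bar_image_mu_bar [simp]: "mu_bar ` mu_bar ` C = C"
  by (simp add: image_image)

lemma mu_bar_vec_add:
  "length x = length y \<Longrightarrow> mu_bar (vec_add x y) = vec_add (mu_bar x) (mu_bar y)"
  by (rule nth_equalityI) (auto simp: vec_add_def R_mul_add_distrib)

lemma mu_bar_vec_smult: "mu_bar (vec_smult r x) = vec_smult r (mu_bar x)"
  by (rule nth_equalityI) (simp_all add: vec_smult_def R_mul_left_commute)

lemma mu_bar_replicate_zero: "mu_bar (replicate n R_zero) = replicate n R_zero"
  by (rule nth_equalityI) (auto simp: R_mul_zero_right)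

lemma mu_bar_map2_sub:
  "length x = length y \<Longrightarrow> mu_bar (map2 R_sub x y) = map2 R_sub (mu_bar x) (mu_bar y)"
  by (rule nth_equalityI) (auto simp: R_mul_sub_distrib)

lemma lee_weight_conv_nth: "lee_weight v = (\<Sum>i<length v. lee_R (v ! i))"
  unfolding lee_weight_def by (simp add: sum_list_sum_nth atLeast0LessThan)

lemma lee_weight_mu_bar: "lee_weight (mu_bar v) = lee_weight v"
  unfolding lee_weight_conv_nth by (simp add: lee_R_mul_R_pow_unit_1_2u)

lemma lee_dist_mu_bar:
  "length x = length y \<Longrightarrow> lee_dist (mu_bar x) (mu_bar y) = lee_dist x y"
  by (simp add: lee_dist_def lee_weight_mu_bar flip: mu_bar_map2_sub)

lemma constacyc_shift_mu_bar:
  assumes "length c = n" and "odd n"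
  shows "constacyc_shift (mu_bar c) = vec_smult unit_1_2u (mu_bar (cyc_shift c))"
proof (rule nth_equalityI)
  have "c \<noteq> []" using assms by auto
  then show "length (constacyc_shift (mu_bar c)) = length (vec_smult unit_1_2u (mu_bar (cyc_shift c)))"
    by (simp add: constacyc_shift_def cyc_shift_def vec_smult_def)
  fix i assume "i < length (constacyc_shift (mu_bar c))"
  then have i: "i < n" using \<open>c \<noteq> []\<close> assms(1) by (auto simp: constacyc_shift_def)
  have last_c: "last c = c ! (n - 1)"
    using \<open>c \<noteq> []\<close> assms(1) by (simp add: last_conv_nth)
  have last_mu: "last (mu_bar c) = R_mul (R_pow unit_1_2u (n - 1)) (c ! (n - 1))"
    using \<open>c \<noteq> []\<close> assms(1) by (simp add: last_conv_nth flip: length_0_conv)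
  show "constacyc_shift (mu_bar c) ! i = vec_smult unit_1_2u (mu_bar (cyc_shift c)) ! i"
  proof (cases i)
    case 0
    have "R_pow unit_1_2u (n - 1) = R_one"
      using assms(2) by (simp add: R_pow_unit_1_2u)
    then show ?thesis
      using 0 \<open>c \<noteq> []\<close> assms(1) last_c last_mu
      by (simp add: constacyc_shift_def cyc_shift_def vec_smult_def)
  next
    case (Suc j)
    then show ?thesis
      using i \<open>c \<noteq> []\<close> assms(1)
      by (simp add: constacyc_shift_def cyc_shift_def vec_smult_def nth_butlast
          R_mul_assoc unit_1_2u_squared)
  qed
qed

lemma linear_code_length: "linear_code n C \<Longrightarrow> x \<in> C \<Longrightarrow> length x = n"
  unfolding linear_code_def by auto

lemma linear_code_vec_smult_unit_1_2u_iff: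
  assumes "linear_code n C"
  shows "vec_smult unit_1_2u x \<in> C \<longleftrightarrow> x \<in> C"
  using assms unfolding linear_code_def by (metis vec_smult_unit_1_2u_twice)

lemma linear_code_image_mu_bar:
  assumes "linear_code n C"
  shows "linear_code n (mu_bar ` C)"
  unfolding linear_code_def
proof (intro conjI ballI allI)
  have len: "\<And>x. x \<in> C \<Longrightarrow> length x = n"
    using assms by (rule linear_code_length)
  then show "mu_bar ` C \<subseteq> {v. length v = n}"
    by auto
  show "replicate n R_zero \<in> mu_bar ` C"
    using assms unfolding linear_code_def by (metis image_eqI mu_bar_replicate_zero)
  fix x y assume "x \<in> mu_bar ` C" "y \<in> mu_bar ` C"
  then obtain a b where ab: "a \<in> C" "b \<in> C" "x = mu_bar a" "y = mu_bar b"
    by blast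
  then have "vec_add x y = mu_bar (vec_add a b)"
    using len by (simp add: mu_bar_vec_add)
  moreover have "vec_add a b \<in> C"
    using ab assms unfolding linear_code_def by blast
  ultimately show "vec_add x y \<in> mu_bar ` C"
    by blast
next
  fix r x assume "x \<in> mu_bar ` C"
  then obtain a where "a \<in> C" "x = mu_bar a"
    by blast
  moreover have "vec_smult r a \<in> C"
    using \<open>a \<in> C\<close> assms unfolding linear_code_def by blast
  ultimately show "vec_smult r x \<in> mu_bar ` C"
    by (metis image_eqI mu_bar_vec_smult)
qed

lemma linear_code_image_mu_bar_iff: "linear_code n (mu_bar ` C) \<longleftrightarrow> linear_code n C"
  by (metis linear_code_image_mu_bar image_mu_bar_image_mu_bar)

lemma has_min_lee_dist_image_isometry:
  assumes "inj_on f C"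
    and "\<And>x y. x \<in> C \<Longrightarrow> y \<in> C \<Longrightarrow> lee_dist (f x) (f y) = lee_dist x y"
  shows "has_min_lee_dist (f ` C) d \<longleftrightarrow> has_min_lee_dist C d"
proof -
  have "f x \<noteq> f y \<longleftrightarrow> x \<noteq> y" if "x \<in> C" "y \<in> C" for x y
    using assms(1) that by (auto dest: inj_onD)
  with assms(2) show ?thesis
    unfolding has_min_lee_dist_def by (simp add: ball_simps bex_simps)
qed

lemma cyclic_code_iff_constacyclic_code_mu_bar:
  assumes "odd n"
  shows "cyclic_code n C \<longleftrightarrow> constacyclic_code n (mu_bar ` C)"
proof -
  have shift_iff: "constacyc_shift (mu_bar c) \<in> mu_bar ` C \<longleftrightarrow> cyc_shift c \<in> C"
    if lin: "linear_code n C" and "c \<in> C" for c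
  proof -
    have "constacyc_shift (mu_bar c) = mu_bar (vec_smult unit_1_2u (cyc_shift c))"
      using linear_code_length[OF that] assms
      by (simp add: constacyc_shift_mu_bar mu_bar_vec_smult)
    then show ?thesis
      by (simp add: inj_image_mem_iff[OF inj_mu_bar] linear_code_vec_smult_unit_1_2u_iff[OF lin])
  qed
  show ?thesis
    unfolding cyclic_code_def constacyclic_code_def linear_code_image_mu_bar_iff
    using shift_iff by blast
qed

theorem corollary4p8:
  fixes n :: nat and C :: "R list set" and d :: nat
  assumes "odd n"
  shows "(cyclic_code n C \<and> has_min_lee_dist C d) \<longleftrightarrow>
         (constacyclic_code n (mu_bar ` C) \<and> has_min_lee_dist (mu_bar ` C) d)"
proof -
  have "has_min_lee_dist (mu_bar ` C) d \<longleftrightarrow> has_min_lee_dist C d"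
    if "cyclic_code n C"
  proof (rule has_min_lee_dist_image_isometry)
    show "inj_on mu_bar C"
      using inj_mu_bar by (rule inj_on_subset) simp
    show "lee_dist (mu_bar x) (mu_bar y) = lee_dist x y" if "x \<in> C" "y \<in> C" for x y
    proof -
      have "linear_code n C"
        using \<open>cyclic_code n C\<close> by (simp add: cyclic_code_def)
      then show ?thesis
        using that by (simp add: linear_code_length lee_dist_mu_bar)
    qed
  qed
  then show ?thesis
    using cyclic_code_iff_constacyclic_code_mu_bar[OF assms] by blast
qed

end
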